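(* Let $I$ be a monoid and let $A$ be a finite set with an $I$-action $(\alpha_l,\alpha_r)$ whose left component $\alpha_l$ is trivial. Let $\mathrm{A}^r=\{x\in A:\ \text{for all } i\in I,\ \alpha_r(i)|_{xI}\text{ is one-to-one}\}$, where $xI=\{(x)\alpha_r(i):i\in I\}$. Then there is a bijection $\mathrm{Map}^r_I(A)\cong\mathrm{A}^r$.
   Context: Let $I$ be a monoid with operation $\otimes$. For a set $X$, $\mathrm{End}_l(X)$ denotes self-maps written on the left with product $f\circ g$ ($g$ first); $\mathrm{End}_r(X)$ denotes self-maps written on the right, $x\mapsto(x)f$, with $(x)(fg)=((x)f)g$. An $I$-action on $X$ is a pair $(\xi_l,\xi_r)$ of monoid homomorphisms $\xi_l:I\to\mathrm{End}_l(X)$, $\xi_r:I\to\mathrm{End}_r(X)$ with $(\xi_l(i)(x))\xi_r(j)=\xi_l(i)((x)\xi_r(j))$; "$\alpha_l$ trivial" means $\alpha_l(i)=\mathrm{id}_A$ for all $i$. $\mathrm{Map}^r_I(A)$ is the set of functions $f:I\to A$ with $(f(i\otimes j))\alpha_r(i)=\alpha_l(i)(f(j))$ for all $i,j\in I$ (here: $(f(i\otimes j))\alpha_r(i)=f(j)$). *)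

theory Defs
  imports Main
begin

text \<open>A left map al i acts as
x to al i x; a right map ar i acts as x to (x)ar(i), written ar i x, so that
(x)(ij) = ((x)i)j reads ar (i*j) x = ar j (ar i x).\<close>

definition is_I_action ::
  "'a set \<Rightarrow> ('i::monoid_mult \<Rightarrow> 'a \<Rightarrow> 'a) \<Rightarrow> ('i \<Rightarrow> 'a \<Rightarrow> 'a) \<Rightarrow> bool" where
  "is_I_action A al ar \<longleftrightarrow>
     (\<forall>i. \<forall>x\<in>A. al i x \<in> A \<and> ar i x \<in> A) \<and>
     (\<forall>x\<in>A. al 1 x = x \<and> ar 1 x = x) \<and>
     (\<forall>i j. \<forall>x\<in>A. al (i * j) x = al i (al j x)) \<and>
     (\<forall>i j. \<forall>x\<in>A. ar (i * j) x = ar j (ar i x)) \<and>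
     (\<forall>i j. \<forall>x\<in>A. ar j (al i x) = al i (ar j x))"

definition Map_r ::
  "'a set \<Rightarrow> ('i::monoid_mult \<Rightarrow> 'a \<Rightarrow> 'a) \<Rightarrow> ('i \<Rightarrow> 'a \<Rightarrow> 'a) \<Rightarrow> ('i \<Rightarrow> 'a) set" where
  "Map_r A al ar = {f. (\<forall>i. f i \<in> A) \<and> (\<forall>i j. ar i (f (i * j)) = al i (f j))}"

definition orbit_r :: "('i \<Rightarrow> 'a \<Rightarrow> 'a) \<Rightarrow> 'a \<Rightarrow> 'a set" where
  "orbit_r ar x = {ar i x | i. True}"

definition A_r :: "'a set \<Rightarrow> ('i \<Rightarrow> 'a \<Rightarrow> 'a) \<Rightarrow> 'a set" where
  "A_r A ar = {x \<in> A. \<forall>i. inj_on (ar i) (orbit_r ar x)}"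

end

theory Submission
  imports Defs
begin

text \<open>With trivial left action the defining identity of the mapping set says that
f i is a preimage of x = f 1 under the right action of i. For such f the finite set
f I is contained in its image under every right translation, hence permuted by it, and
a pigeonhole argument on the powers of i shows f I = x I. So x lies in A^r, and f i is
the unique preimage of x in x I, i.e. f is determined by x. Conversely, for x in A^r
every right translation permutes x I, and choosing these preimages defines f.\<close>

lemma finite_subset_image_imp_bij:
  assumes "finite S" and "S \<subseteq> h ` S"
  shows "h ` S = S" and "inj_on h S"
proof -
  show inj: "inj_on h S" using finite_surj_inj[OF assms] .
  show "h ` S = S"
    using card_subset_eq[OF finite_imageI[OF assms(1)] assms(2)] card_image[OF inj] by simp
qed

locale right_action =
  fixes A :: "'a set" and ar :: "'i::monoid_mult \<Rightarrow> 'a \<Rightarrow> 'a"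
  assumes finite_carrier: "finite A"
    and action_closed: "\<And>i x. x \<in> A \<Longrightarrow> ar i x \<in> A"
    and action_one: "\<And>x. x \<in> A \<Longrightarrow> ar 1 x = x"
    and action_mult: "\<And>i j x. x \<in> A \<Longrightarrow> ar (i * j) x = ar j (ar i x)"
begin

definition equivariant_maps :: "('i \<Rightarrow> 'a) set" where
  "equivariant_maps = {f. (\<forall>i. f i \<in> A) \<and> (\<forall>i j. ar i (f (i * j)) = f j)}"

lemma orbit_subset: "x \<in> A \<Longrightarrow> orbit_r ar x \<subseteq> A"
  by (auto simp: orbit_r_def action_closed)

lemma finite_orbit: "x \<in> A \<Longrightarrow> finite (orbit_r ar x)"
  using orbit_subset finite_carrier finite_subset by blast

lemma action_in_orbit: "ar i x \<in> orbit_r ar x"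
  by (auto simp: orbit_r_def)

lemma self_in_orbit: "x \<in> A \<Longrightarrow> x \<in> orbit_r ar x"
  using action_in_orbit[of 1 x] action_one by simp

lemma action_orbit_closed: "x \<in> A \<Longrightarrow> y \<in> orbit_r ar x \<Longrightarrow> ar i y \<in> orbit_r ar x"
  by (auto simp: orbit_r_def action_mult[symmetric])

lemma A_r_permutes_orbit:
  assumes "x \<in> A_r A ar"
  shows "ar i ` orbit_r ar x = orbit_r ar x" and "inj_on (ar i) (orbit_r ar x)"
proof -
  have "x \<in> A" and inj: "inj_on (ar i) (orbit_r ar x)"
    using assms by (auto simp: A_r_def)
  then show "ar i ` orbit_r ar x = orbit_r ar x"
    using endo_inj_surj[OF finite_orbit _ inj] action_orbit_closed by blast
  show "inj_on (ar i) (orbit_r ar x)" by (fact inj)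
qed

context
  fixes f :: "'i \<Rightarrow> 'a"
  assumes f_in_carrier: "\<And>i. f i \<in> A"
    and f_equivariant: "\<And>i j. ar i (f (i * j)) = f j"
begin

lemma finite_range_map: "finite (range f)"
  using f_in_carrier finite_carrier by (blast intro: finite_subset)

lemma action_permutes_range:
  shows "ar i ` range f = range f" and "inj_on (ar i) (range f)"
proof -
  have "f j \<in> ar i ` range f" for j
    using f_equivariant[of i j] by (metis rangeI image_eqI)
  then have "range f \<subseteq> ar i ` range f" by blast
  then show "ar i ` range f = range f" and "inj_on (ar i) (range f)"
    using finite_subset_image_imp_bij finite_range_map by blast+
qed

lemma power_action_recurs: "\<exists>n>0. ar (i ^ n) y = y" if "y \<in> range f"
proof -
  let ?seq = "\<lambda>k. ar (i ^ k) y"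
  have "range ?seq \<subseteq> range f"
    using action_permutes_range(1) that by blast
  then have "\<not> inj ?seq"
    using finite_range_map finite_subset finite_imageD by blast
  then obtain u v where "u < v" and eq: "?seq u = ?seq v"
    unfolding inj_def by (metis linorder_neqE_nat)
  have "i ^ v = i ^ (v - u) * i ^ u"
    using \<open>u < v\<close> by (metis le_add_diff_inverse2 less_imp_le power_add)
  then have "ar (i ^ u) y = ar (i ^ u) (ar (i ^ (v - u)) y)"
    using eq action_mult that f_in_carrier by auto
  moreover have "ar (i ^ (v - u)) y \<in> range f"
    using action_permutes_range(1) that by blast
  ultimately have "ar (i ^ (v - u)) y = y"
    using action_permutes_range(2) that by (metis inj_onD)
  then show ?thesis using \<open>u < v\<close> zero_less_diff by blast
qed

lemma range_eq_orbit: "range f = orbit_r ar (f 1)"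
proof
  show "orbit_r ar (f 1) \<subseteq> range f"
    using action_permutes_range(1) unfolding orbit_r_def by blast
  show "range f \<subseteq> orbit_r ar (f 1)"
  proof
    fix y assume "y \<in> range f"
    then obtain j where y: "y = f j" by blast
    obtain n where "n > 0" and "ar (j ^ n) (f j) = f j"
      using power_action_recurs by blast
    moreover have "j ^ n = j * j ^ (n - 1)"
      using \<open>n > 0\<close> by (simp add: power_eq_if)
    moreover have "ar j (f j) = f 1"
      using f_equivariant[of j 1] by simp
    ultimately have "y = ar (j ^ (n - 1)) (f 1)"
      using y action_mult f_in_carrier by metis
    then show "y \<in> orbit_r ar (f 1)" by (simp add: action_in_orbit)
  qed
qed

lemma value_at_one_in_A_r: "f 1 \<in> A_r A ar"
  using f_in_carrier action_permutes_range(2) range_eq_orbit by (simp add: A_r_def)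

end

lemma A_r_obtain_equivariant_map:
  assumes "x \<in> A_r A ar"
  obtains f where "f \<in> equivariant_maps" and "f 1 = x"
proof
  have "x \<in> A" using assms by (simp add: A_r_def)
  define f where "f i = inv_into (orbit_r ar x) (ar i) x" for i
  have x_in_image: "x \<in> ar i ` orbit_r ar x" for i
    using A_r_permutes_orbit(1)[OF assms] self_in_orbit[OF \<open>x \<in> A\<close>] by simp
  have f_in_orbit: "f i \<in> orbit_r ar x" and f_preimage: "ar i (f i) = x" for i
    using inv_into_into[OF x_in_image] f_inv_into_f[OF x_in_image] by (auto simp: f_def)
  have f_in_carrier: "f i \<in> A" for i
    using f_in_orbit orbit_subset[OF \<open>x \<in> A\<close>] by blast
  have "ar i (f (i * j)) = f j" for i j
  proof -
    have "ar j (ar i (f (i * j))) = ar j (f j)"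
      using f_preimage action_mult f_in_carrier by metis
    moreover have "ar i (f (i * j)) \<in> orbit_r ar x"
      using action_orbit_closed[OF \<open>x \<in> A\<close>] f_in_orbit by blast
    ultimately show ?thesis
      using A_r_permutes_orbit(2)[OF assms] f_in_orbit by (meson inj_onD)
  qed
  then show "f \<in> equivariant_maps"
    using f_in_carrier by (simp add: equivariant_maps_def)
  show "f 1 = x" using f_preimage[of 1] action_one f_in_carrier by metis
qed

lemma Map_r_trivial_left_eq:
  assumes "\<forall>i. \<forall>x\<in>A. al i x = x"
  shows "Map_r A al ar = equivariant_maps"
  using assms by (auto simp: Map_r_def equivariant_maps_def)

lemma bij_betw_value_at_one: "bij_betw (\<lambda>f. f 1) equivariant_maps (A_r A ar)"
proof (rule bij_betwI')
  fix f g
  assume "f \<in> equivariant_maps" and "g \<in> equivariant_maps"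
  then have f: "\<And>i. f i \<in> A" "\<And>i j. ar i (f (i * j)) = f j"
    and g: "\<And>i. g i \<in> A" "\<And>i j. ar i (g (i * j)) = g j" by (auto simp: equivariant_maps_def)
  show "f 1 = g 1 \<longleftrightarrow> f = g"
  proof
    assume one: "f 1 = g 1"
    show "f = g"
    proof
      fix i
      have "f i \<in> range f" and "g i \<in> range f"
        using range_eq_orbit[OF f] range_eq_orbit[OF g] one by auto
      moreover have "ar i (f i) = ar i (g i)"
        using f(2)[of i 1] g(2)[of i 1] one by simp
      ultimately show "f i = g i"
        using action_permutes_range(2)[OF f] by (meson inj_onD)
    qed
  qed simp
  show "f 1 \<in> A_r A ar" using value_at_one_in_A_r[OF f] .
next
  fix x assume "x \<in> A_r A ar"
  then obtain f where "f \<in> equivariant_maps" and "f 1 = x"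
    by (rule A_r_obtain_equivariant_map)
  then show "\<exists>f \<in> equivariant_maps. x = f 1" by blast
qed

end

theorem mainTheorem12:
  fixes A :: "'a set"
    and al ar :: "'i::monoid_mult \<Rightarrow> 'a \<Rightarrow> 'a"
  assumes "finite A"
    and "is_I_action A al ar"
    and "\<forall>i. \<forall>x\<in>A. al i x = x"
  shows "\<exists>\<phi>. bij_betw \<phi> (Map_r A al ar) (A_r A ar)"
proof -
  interpret right_action A ar
    using assms(1,2) by unfold_locales (auto simp: is_I_action_def)
  show ?thesis
    using bij_betw_value_at_one Map_r_trivial_left_eq[OF assms(3)] by auto
qed

end
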